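(* Let $M=((W,\preccurlyeq),V)$ be an intuitionistic model, $T\subseteq\mathbb{P}$ and $w\in W$ such that (1) $\{v\in W\mid w\preccurlyeq v\}$ has a unique maximal world $u$, and (2) $V(v)=T$ for all $v\in W$ with $w\preccurlyeq v$ and $v\ne w$. Then there exist an HT model $M'=((\{0,1\},\preccurlyeq'),V')$ and a bisimulation $Z\subseteq W\times\{0,1\}$ with $w\,Z\,0$.
   Context: Propositional intuitionistic Kripke semantics over a countable atom set $\mathbb{P}$: an intuitionistic model is $((W,\preccurlyeq),V)$ with $W\ne\emptyset$, $\preccurlyeq$ a partial order and $V:W\to2^{\mathbb{P}}$ monotone along $\preccurlyeq$. A world is maximal if no distinct world lies $\preccurlyeq$-above it. An HT model is an intuitionistic model on the frame $(\{0,1\},\preccurlyeq')$ with $\preccurlyeq'=\{(0,0),(1,1),(0,1)\}$. A bisimulation between $M_1=((W_1,\preccurlyeq_1),V_1)$ and $M_2=((W_2,\preccurlyeq_2),V_2)$ is a relation $Z\subseteq W_1\times W_2$ such that whenever $w_1Zw_2$: (C1) $V_1(w_1)=V_2(w_2)$; (C2) for every $v_1\succcurlyeq_1 w_1$ there is $v_2\succcurlyeq_2w_2$ with $v_1Zv_2$; (C3) for every $v_2\succcurlyeq_2w_2$ there is $v_1\succcurlyeq_1w_1$ with $v_1Zv_2$. *)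

theory Defs
  imports "HOL-Library.Countable"
begin

definition int_model :: "'w set \<Rightarrow> ('w \<times> 'w) set \<Rightarrow> ('w \<Rightarrow> 'p::countable set) \<Rightarrow> bool" where
  "int_model W le V \<longleftrightarrow>
     W \<noteq> {} \<and> le \<subseteq> W \<times> W \<and> refl_on W le \<and> antisym le \<and> trans le \<and>
     (\<forall>w v. (w, v) \<in> le \<longrightarrow> V w \<subseteq> V v)"

definition maximal_world :: "'w set \<Rightarrow> ('w \<times> 'w) set \<Rightarrow> 'w \<Rightarrow> bool" where
  "maximal_world W le u \<longleftrightarrow> u \<in> W \<and> (\<forall>v\<in>W. (u, v) \<in> le \<longrightarrow> v = u)"

definition ht_worlds :: "nat set" where
  "ht_worlds = {0, 1}"

definition ht_le :: "(nat \<times> nat) set" where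
  "ht_le = {(0,0), (1,1), (0,1)}"

definition ht_model :: "(nat \<Rightarrow> 'p::countable set) \<Rightarrow> bool" where
  "ht_model V' \<longleftrightarrow> int_model ht_worlds ht_le V'"

definition bisimulation ::
  "'a set \<Rightarrow> ('a \<times> 'a) set \<Rightarrow> ('a \<Rightarrow> 'p set) \<Rightarrow>
   'b set \<Rightarrow> ('b \<times> 'b) set \<Rightarrow> ('b \<Rightarrow> 'p set) \<Rightarrow> ('a \<times> 'b) set \<Rightarrow> bool" where
  "bisimulation W1 le1 V1 W2 le2 V2 Z \<longleftrightarrow>
     Z \<subseteq> W1 \<times> W2 \<and>
     (\<forall>w1 w2. (w1, w2) \<in> Z \<longrightarrow>
        V1 w1 = V2 w2 \<and>
        (\<forall>v1. (w1, v1) \<in> le1 \<longrightarrow> (\<exists>v2. (w2, v2) \<in> le2 \<and> (v1, v2) \<in> Z)) \<and>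
        (\<forall>v2. (w2, v2) \<in> le2 \<longrightarrow> (\<exists>v1. (w1, v1) \<in> le1 \<and> (v1, v2) \<in> Z)))"

end

theory Submission
  imports Defs
begin

text \<open>Collapse the cone above \<open>w\<close> onto the HT frame: \<open>w\<close> goes to world 0, and every
  world above \<open>w\<close> carrying the valuation of the top world \<open>u\<close> goes to world 1.
  Since all worlds strictly above \<open>w\<close> carry that valuation, going up from \<open>w\<close> in \<open>M\<close>
  means staying at \<open>w\<close> or entering the image of world 1, and \<open>u\<close> witnesses the
  step from 0 to 1 in the other direction.\<close>

lemma ht_model_two_valued:
  assumes "A \<subseteq> B"
  shows "ht_model (\<lambda>n. if n = 0 then A else B)"
  using assms unfolding ht_model_def int_model_def ht_worlds_def ht_le_def
  by (auto simp: refl_on_def antisym_def trans_def)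

lemma ht_bisimulation_of_cone:
  assumes M: "int_model W le V" and "w \<in> W" and wu: "(w, u) \<in> le"
    and cone: "\<forall>v. (w, v) \<in> le \<and> v \<noteq> w \<longrightarrow> V v = V u"
  defines "Z \<equiv> insert (w, 0) {(v, 1) | v. (w, v) \<in> le \<and> V v = V u}"
  shows "bisimulation W le V ht_worlds ht_le (\<lambda>n. if n = 0 then V w else V u) Z"
proof -
  have le_W: "le \<subseteq> W \<times> W" and "refl_on W le" "trans le" "antisym le"
    using M unfolding int_model_def by auto
  then have refl_le: "\<And>x. x \<in> W \<Longrightarrow> (x, x) \<in> le"
    and trans_le: "\<And>x y z. (x, y) \<in> le \<Longrightarrow> (y, z) \<in> le \<Longrightarrow> (x, z) \<in> le"
    and antisym_le: "\<And>x y. (x, y) \<in> le \<Longrightarrow> (y, x) \<in> le \<Longrightarrow> x = y"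
    by (auto simp: refl_on_def trans_def antisym_def)
  have up_from_w: "(y, 0) \<in> Z \<or> (y, 1) \<in> Z" if "(w, y) \<in> le" for y
    using that cone unfolding Z_def by auto
  have up_closed_1: "(y, 1) \<in> Z" if "(x, 1) \<in> Z" "(x, y) \<in> le" for x y
  proof -
    have wx: "(w, x) \<in> le" "V x = V u" using that(1) unfolding Z_def by auto
    have "V y = V u"
    proof (cases "y = w")
      case True
      then have "x = w" using antisym_le wx(1) that(2) by blast
      then show ?thesis using True wx(2) by simp
    qed (use cone trans_le wx that(2) in blast)
    then show ?thesis using trans_le[OF wx(1) that(2)] unfolding Z_def by simp
  qed
  have "u \<in> W" "(u, 1) \<in> Z" using wu le_W unfolding Z_def by auto
  show ?thesis
    unfolding bisimulation_def
  proof (intro conjI allI impI)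
    show "Z \<subseteq> W \<times> ht_worlds"
      using \<open>w \<in> W\<close> le_W unfolding Z_def ht_worlds_def by auto
  next
    fix x n assume "(x, n) \<in> Z"
    then consider "x = w" "n = 0" | "(x, 1) \<in> Z" "n = 1"
      unfolding Z_def by auto
    note pair_cases = this
    show "V x = (if n = 0 then V w else V u)"
      using pair_cases by cases (auto simp: Z_def)
    show "\<exists>m. (n, m) \<in> ht_le \<and> (y, m) \<in> Z" if "(x, y) \<in> le" for y
      using pair_cases
    proof cases
      case 1
      then show ?thesis using up_from_w that unfolding ht_le_def by blast
    next
      case 2
      then show ?thesis using up_closed_1 that unfolding ht_le_def by blast
    qed
    show "\<exists>y. (x, y) \<in> le \<and> (y, m) \<in> Z" if "(n, m) \<in> ht_le" for m
      using pair_cases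
    proof cases
      case 1
      then show ?thesis
        using that refl_le \<open>w \<in> W\<close> wu \<open>(u, 1) \<in> Z\<close> unfolding ht_le_def Z_def by auto
    next
      case 2
      then have "x \<in> W" unfolding Z_def using le_W by auto
      then show ?thesis using 2 that refl_le unfolding ht_le_def by auto
    qed
  qed
qed

theorem lemma2p7:
  fixes W :: "'w set" and le :: "('w \<times> 'w) set" and V :: "'w \<Rightarrow> 'p::countable set"
    and T :: "'p set" and w :: 'w
  assumes "int_model W le V"
    and "w \<in> W"
    and "\<exists>!u. u \<in> W \<and> (w, u) \<in> le \<and> maximal_world W le u"
    and "\<forall>v\<in>W. (w, v) \<in> le \<and> v \<noteq> w \<longrightarrow> V v = T"
  shows "\<exists>V' :: nat \<Rightarrow> 'p set. \<exists>Z :: ('w \<times> nat) set.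
           ht_model V' \<and> bisimulation W le V ht_worlds ht_le V' Z \<and> (w, 0) \<in> Z"
proof -
  obtain u where u: "u \<in> W" "(w, u) \<in> le" "maximal_world W le u"
    using assms(3) by blast
  have le_W: "le \<subseteq> W \<times> W" and mono: "V w \<subseteq> V u"
    using assms(1) u(2) unfolding int_model_def by auto
  have cone: "\<forall>v. (w, v) \<in> le \<and> v \<noteq> w \<longrightarrow> V v = V u"
  proof (cases "u = w")
    case True
    then show ?thesis using u(3) le_W unfolding maximal_world_def by blast
  next
    case False
    then show ?thesis using assms(4) u le_W by blast
  qed
  show ?thesis
    using ht_model_two_valued[OF mono] ht_bisimulation_of_cone[OF assms(1,2) u(2) cone]
    by blast
qed

end
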